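(* Let $n\ge 4$. For every extreme point $\bar x$ of $P^n$ with all coordinates in $\{0,\tfrac12,1\}$ there exist $y^1,y^2\in\mathcal C^n$ such that $\bar x=\tfrac12 y^1+\tfrac12 y^2$.
   Context: Let $V=\{0,\dots,n-1\}$ and $E=\{(u,v)\in V\times V:u\neq v\}$ be the arc set of the complete digraph, with arcs written $uv$. For $w\in V$ let $\delta^+(w)$ and $\delta^-(w)$ denote the sets of arcs leaving and entering $w$. For $S\subseteq V$ let $\delta^+(S)=\{uv\in E:u\in S,\ v\notin S\}$, and let $\mathcal S=\{S\subset V:2\le|S|\le n-2\}$. For $x\in\mathbb R^E$ and $F\subseteq E$ write $x(F)=\sum_{e\in F}x_e$. The asymmetric subtour elimination polytope is $$P^n=\{x\in\mathbb R^E:\ x(\delta^+(w))=1 \text{ and } x(\delta^-(w))=1\ \forall w\in V,\ \ x(\delta^+(S))\ge 1\ \forall S\in\mathcal S,\ \ x\ge 0\}.$$ Let $\mathcal C^n=\{y\in\{0,1\}^E:\ y(\delta^+(w))=y(\delta^-(w))=1\ \forall w\in V\}$. These are the characteristic vectors of cycle covers, i.e. of spanning collections of vertex-disjoint directed cycles, each of length at least $2$, covering $V$. *)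

theory Defs
  imports "HOL-Analysis.Analysis"
begin

text \<open>Vertices are 0..n-1; arcs are pairs (u,v) with u \<noteq> v. A vector in R^E is modelled
  as a function nat \<times> nat \<Rightarrow> real that vanishes outside E.\<close>

definition arcs :: "nat \<Rightarrow> (nat \<times> nat) set" where
  "arcs n = {(u,v). u < n \<and> v < n \<and> u \<noteq> v}"

definition out_arcs :: "nat \<Rightarrow> nat set \<Rightarrow> (nat \<times> nat) set" where
  "out_arcs n S = {(u,v) \<in> arcs n. u \<in> S \<and> v \<notin> S}"

definition delta_out :: "nat \<Rightarrow> nat \<Rightarrow> (nat \<times> nat) set" where
  "delta_out n w = {(u,v) \<in> arcs n. u = w}"

definition delta_in :: "nat \<Rightarrow> nat \<Rightarrow> (nat \<times> nat) set" where
  "delta_in n w = {(u,v) \<in> arcs n. v = w}"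

definition RE :: "nat \<Rightarrow> (nat \<times> nat \<Rightarrow> real) set" where
  "RE n = {x. \<forall>e. e \<notin> arcs n \<longrightarrow> x e = 0}"

definition ASEP :: "nat \<Rightarrow> (nat \<times> nat \<Rightarrow> real) set" where
  "ASEP n = {x \<in> RE n.
     (\<forall>w < n. sum x (delta_out n w) = 1 \<and> sum x (delta_in n w) = 1) \<and>
     (\<forall>S. S \<subseteq> {0..<n} \<and> 2 \<le> card S \<and> card S \<le> n - 2 \<longrightarrow> sum x (out_arcs n S) \<ge> 1) \<and>
     (\<forall>e \<in> arcs n. x e \<ge> 0)}"

definition cycle_covers :: "nat \<Rightarrow> (nat \<times> nat \<Rightarrow> real) set" where
  "cycle_covers n = {y \<in> RE n. (\<forall>e \<in> arcs n. y e = 0 \<or> y e = 1) \<and>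
     (\<forall>w < n. sum y (delta_out n w) = 1 \<and> sum y (delta_in n w) = 1)}"

text \<open>Extreme point, literally as extreme_point_of in HOL-Analysis (x \<in> S and x not in the
  open segment of two points of S), spelled out for function vectors.\<close>
definition extreme_pt :: "(nat \<times> nat \<Rightarrow> real) \<Rightarrow> (nat \<times> nat \<Rightarrow> real) set \<Rightarrow> bool" where
  "extreme_pt x S \<longleftrightarrow> x \<in> S \<and>
     (\<forall>a \<in> S. \<forall>b \<in> S. \<not> (a \<noteq> b \<and> (\<exists>t::real. 0 < t \<and> t < 1 \<and> x = (\<lambda>e. (1 - t) * a e + t * b e))))"

end

theory Submission
  imports Defs
begin

(* Let F be the arcs with value 1 and H those with value 1/2. At every vertex the degree
   equations leave either one F-arc and no H-arc or no F-arc and two H-arcs, in both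
   directions, so H is a 2-regular bipartite graph between tails and heads. Such a graph is the
   disjoint union of two perfect matchings M and H - M (by induction: a 4-cycle component is
   deleted, otherwise a path a'-b-a-b' is shortcut to the edge a'-b'), and then F \<union> M and
   F \<union> (H - M) are cycle covers whose average is x. *)

lemma card_2_other:
  assumes "card S = 2" "x \<in> S"
  obtains y where "y \<noteq> x" "S = {x, y}"
  using assms unfolding card_2_iff by (metis insert_commute insertE singletonD)

lemma card_2_eq:
  assumes "card S = 2" "x \<in> S" "y \<in> S" "x \<noteq> y"
  shows "S = {x, y}"
  using assms unfolding card_2_iff by blast

definition two_regular :: "('a \<times> 'b) set \<Rightarrow> bool" where
  "two_regular H \<longleftrightarrow>
     (\<forall>u \<in> Domain H. card (H``{u}) = 2) \<and> (\<forall>v \<in> Range H. card (H\<inverse>``{v}) = 2)"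

definition perfect_matching :: "('a \<times> 'b) set \<Rightarrow> ('a \<times> 'b) set \<Rightarrow> bool" where
  "perfect_matching M H \<longleftrightarrow> M \<subseteq> H \<and>
     (\<forall>u \<in> Domain H. card (M``{u}) = 1) \<and> (\<forall>v \<in> Range H. card (M\<inverse>``{v}) = 1)"

lemma perfect_matching_converse: "perfect_matching (M\<inverse>) (H\<inverse>) \<longleftrightarrow> perfect_matching M H"
  by (auto simp: perfect_matching_def)

lemma card_Image_Diff:
  assumes "card (R``{u}) = 2" "card (N``{u}) = 1" "N \<subseteq> R"
  shows "card ((R - N)``{u}) = 1"
proof -
  have "(R - N)``{u} = R``{u} - N``{u}" by blast
  moreover have "N``{u} \<subseteq> R``{u}" using assms(3) by blast
  moreover have "finite (N``{u})" using assms(2) card.infinite by fastforce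
  ultimately show ?thesis using assms(1,2) by (simp add: card_Diff_subset)
qed

lemma perfect_matching_Diff:
  assumes "two_regular H" "perfect_matching M H"
  shows "perfect_matching (H - M) H"
proof -
  have "(H - M)\<inverse> = H\<inverse> - M\<inverse>" by blast
  then show ?thesis
    using assms card_Image_Diff[of H _ M] card_Image_Diff[of "H\<inverse>" _ "M\<inverse>"]
    by (simp add: two_regular_def perfect_matching_def)
qed

lemma card_Image_Un_disjoint:
  assumes "M1 \<subseteq> H1" "M2 \<subseteq> H2" "Domain H1 \<inter> Domain H2 = {}"
    and "\<forall>u \<in> Domain H1. card (M1``{u}) = 1" "\<forall>u \<in> Domain H2. card (M2``{u}) = 1"
  shows "\<forall>u \<in> Domain (H1 \<union> H2). card ((M1 \<union> M2)``{u}) = 1"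
proof
  fix u assume u: "u \<in> Domain (H1 \<union> H2)"
  show "card ((M1 \<union> M2)``{u}) = 1"
  proof (cases "u \<in> Domain H1")
    case True
    then have "M2``{u} = {}" using assms(2,3) by blast
    then show ?thesis using True assms(4) by (simp add: Un_Image)
  next
    case False
    then have "M1``{u} = {}" "u \<in> Domain H2" using assms(1) u by blast+
    then show ?thesis using assms(5) by (simp add: Un_Image)
  qed
qed

lemma perfect_matching_Un:
  assumes "perfect_matching M1 H1" "perfect_matching M2 H2"
    and "Domain H1 \<inter> Domain H2 = {}" "Range H1 \<inter> Range H2 = {}"
  shows "perfect_matching (M1 \<union> M2) (H1 \<union> H2)"
proof -
  have "\<forall>u \<in> Domain (H1 \<union> H2). card ((M1 \<union> M2)``{u}) = 1"
    using assms by (intro card_Image_Un_disjoint) (auto simp: perfect_matching_def)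
  moreover have "\<forall>v \<in> Domain (H1\<inverse> \<union> H2\<inverse>). card ((M1\<inverse> \<union> M2\<inverse>)``{v}) = 1"
    using assms by (intro card_Image_Un_disjoint) (auto simp: perfect_matching_def)
  ultimately show ?thesis
    using assms(1,2) by (auto simp: perfect_matching_def converse_Un)
qed

definition shortcut :: "'a \<Rightarrow> 'b \<Rightarrow> 'a \<Rightarrow> 'b \<Rightarrow> ('a \<times> 'b) set \<Rightarrow> ('a \<times> 'b) set" where
  "shortcut a b a' b' H = insert (a', b') (H - {(a, b), (a, b'), (a', b)})"

lemma converse_shortcut: "(shortcut a b a' b' H)\<inverse> = shortcut b a b' a' (H\<inverse>)"
  by (auto simp: shortcut_def)

lemma Image_shortcut:
  assumes "H``{a} = {b, b'}" "a \<noteq> a'"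
  shows "shortcut a b a' b' H``{u} =
    (if u = a then {} else if u = a' then insert b' (H``{a'} - {b}) else H``{u})"
  using assms by (auto simp: shortcut_def)

lemma card_Image_shortcut:
  assumes "\<forall>u \<in> Domain H. card (H``{u}) = 2" "H``{a} = {b, b'}" "b \<noteq> b'"
    and "(a', b) \<in> H" "(a', b') \<notin> H"
  shows "\<forall>u \<in> Domain (shortcut a b a' b' H). card (shortcut a b a' b' H``{u}) = 2"
proof
  fix u assume u: "u \<in> Domain (shortcut a b a' b' H)"
  have "a \<noteq> a'" using assms(2,5) by blast
  show "card (shortcut a b a' b' H``{u}) = 2"
  proof (cases "u = a'")
    case True
    obtain c where "c \<noteq> b" "H``{a'} = {b, c}"
      using card_2_other[of "H``{a'}" b] assms(1,4) by blast
    moreover have "c \<noteq> b'" using assms(5) \<open>H``{a'} = {b, c}\<close> by blast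
    moreover have "shortcut a b a' b' H``{a'} = insert b' (H``{a'} - {b})"
      using Image_shortcut[OF assms(2) \<open>a \<noteq> a'\<close>] \<open>a \<noteq> a'\<close> by simp
    ultimately show ?thesis using True assms(3) by auto
  next
    case False
    have "shortcut a b a' b' H``{u} \<noteq> {}" using u by blast
    then show ?thesis using False assms(1) Image_shortcut[OF assms(2) \<open>a \<noteq> a'\<close>, of u]
      by (cases "u = a") (auto simp: Domain_iff)
  qed
qed

lemma two_regular_shortcut:
  assumes "two_regular H" "H``{a} = {b, b'}" "H\<inverse>``{b} = {a, a'}" "b \<noteq> b'" "a \<noteq> a'"
    and "(a', b') \<notin> H"
  shows "two_regular (shortcut a b a' b' H)"
proof -
  have "\<forall>u \<in> Domain (shortcut a b a' b' H). card (shortcut a b a' b' H``{u}) = 2"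
    using assms by (intro card_Image_shortcut) (auto simp: two_regular_def)
  moreover have "\<forall>v \<in> Domain (shortcut b a b' a' (H\<inverse>)). card (shortcut b a b' a' (H\<inverse>)``{v}) = 2"
    using assms by (intro card_Image_shortcut) (auto simp: two_regular_def)
  ultimately show ?thesis by (simp add: two_regular_def converse_shortcut flip: Domain_converse)
qed

lemma card_shortcut_less:
  assumes "finite H" "(a, b) \<in> H" "(a, b') \<in> H" "(a', b) \<in> H" "a \<noteq> a'" "b \<noteq> b'"
  shows "card (shortcut a b a' b' H) < card H"
proof -
  let ?T = "{(a, b), (a, b'), (a', b)}"
  have "card ?T = 3" using assms(5,6) by simp
  moreover have "card ?T \<le> card H" using assms(1-4) by (intro card_mono) auto
  moreover have "card (H - ?T) = card H - card ?T" using assms(2-4) by (intro card_Diff_subset) auto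
  moreover have "card (shortcut a b a' b' H) \<le> Suc (card (H - ?T))"
    using assms(1) by (simp add: shortcut_def card_insert_if)
  ultimately show ?thesis by linarith
qed

definition unshortcut :: "'a \<Rightarrow> 'b \<Rightarrow> 'a \<Rightarrow> 'b \<Rightarrow> ('a \<times> 'b) set \<Rightarrow> ('a \<times> 'b) set" where
  \<comment> \<open>a matching using the edge a'-b' is lifted by the alternation a'-b, a-b'; otherwise a-b is added\<close>
  "unshortcut a b a' b' M =
    (if (a', b') \<in> M then insert (a', b) (insert (a, b') (M - {(a', b')})) else insert (a, b) M)"

lemma converse_unshortcut: "(unshortcut a b a' b' M)\<inverse> = unshortcut b a b' a' (M\<inverse>)"
  by (auto simp: unshortcut_def)

lemma Image_unshortcut:
  assumes "M``{a} = {}" "a \<noteq> a'"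
  shows "unshortcut a b a' b' M``{u} =
    (if (a', b') \<in> M
     then (if u = a then {b'} else if u = a' then insert b (M``{a'} - {b'}) else M``{u})
     else (if u = a then {b} else M``{u}))"
  using assms by (auto simp: unshortcut_def)

lemma card_Image_unshortcut:
  assumes "M \<subseteq> shortcut a b a' b' H" "\<forall>u \<in> Domain (shortcut a b a' b' H). card (M``{u}) = 1"
    and "H``{a} = {b, b'}" "a \<noteq> a'" "(a', b) \<in> H"
  shows "\<forall>u \<in> Domain H. card (unshortcut a b a' b' M``{u}) = 1"
proof
  fix u assume u: "u \<in> Domain H"
  have row: "shortcut a b a' b' H``{w} =
      (if w = a then {} else if w = a' then insert b' (H``{a'} - {b}) else H``{w})" for w
    using Image_shortcut[OF assms(3,4)] .
  have "M``{w} \<subseteq> shortcut a b a' b' H``{w}" for w using assms(1) by blast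
  then have Ma: "M``{a} = {}" using row[of a] by (metis subset_empty)
  have "(a', b') \<in> shortcut a b a' b' H" by (simp add: shortcut_def)
  then have "card (M``{a'}) = 1" using assms(2) by (auto simp: Domain_iff)
  then have Ma': "M``{a'} = {b'}" if "(a', b') \<in> M"
  proof -
    obtain c where "M``{a'} = {c}" using \<open>card (M``{a'}) = 1\<close> by (auto simp: card_1_singleton_iff)
    with that show ?thesis by auto
  qed
  have "unshortcut a b a' b' M``{a} = (if (a', b') \<in> M then {b'} else {b})"
    using Image_unshortcut[OF Ma assms(4)] by simp
  moreover have "unshortcut a b a' b' M``{a'} = (if (a', b') \<in> M then {b} else M``{a'})"
    using Image_unshortcut[OF Ma assms(4)] Ma' assms(4) by simp
  moreover have "unshortcut a b a' b' M``{u} = M``{u}" if "u \<noteq> a" "u \<noteq> a'"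
    using Image_unshortcut[OF Ma assms(4)] that by simp
  moreover have "u \<in> Domain (shortcut a b a' b' H)" if "u \<noteq> a" "u \<noteq> a'"
  proof -
    have "shortcut a b a' b' H``{u} = H``{u}" using row[of u] that by simp
    then show ?thesis using u by blast
  qed
  ultimately show "card (unshortcut a b a' b' M``{u}) = 1"
    using assms(2) \<open>card (M``{a'}) = 1\<close> by (cases "u = a \<or> u = a'") auto
qed

lemma perfect_matching_unshortcut:
  assumes "perfect_matching M (shortcut a b a' b' H)"
    and "H``{a} = {b, b'}" "H\<inverse>``{b} = {a, a'}" "a \<noteq> a'" "b \<noteq> b'"
  shows "perfect_matching (unshortcut a b a' b' M) H"
proof -
  have "unshortcut a b a' b' M \<subseteq> H"
    using assms(1-3) by (auto simp: perfect_matching_def shortcut_def unshortcut_def)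
  moreover have "\<forall>u \<in> Domain H. card (unshortcut a b a' b' M``{u}) = 1"
    using assms by (intro card_Image_unshortcut) (auto simp: perfect_matching_def)
  moreover have "\<forall>v \<in> Domain (H\<inverse>). card (unshortcut b a b' a' (M\<inverse>)``{v}) = 1"
    using assms by (intro card_Image_unshortcut)
      (auto simp: perfect_matching_def converse_shortcut[symmetric])
  ultimately show ?thesis
    by (simp add: perfect_matching_def converse_unshortcut)
qed

lemma two_regular_Diff_component:
  assumes "two_regular H" "\<forall>u \<in> Domain S. S``{u} = H``{u}" "\<forall>v \<in> Range S. S\<inverse>``{v} = H\<inverse>``{v}"
  shows "two_regular (H - S)" "Domain (H - S) \<inter> Domain S = {}" "Range (H - S) \<inter> Range S = {}"
proof -
  show dom: "Domain (H - S) \<inter> Domain S = {}" and ran: "Range (H - S) \<inter> Range S = {}"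
    using assms(2,3) by blast+
  show "two_regular (H - S)"
    unfolding two_regular_def
  proof (intro conjI ballI)
    fix u assume u: "u \<in> Domain (H - S)"
    then have "(H - S)``{u} = H``{u}" "u \<in> Domain H" using dom by blast+
    then show "card ((H - S)``{u}) = 2" using assms(1) unfolding two_regular_def by simp
  next
    fix v assume v: "v \<in> Range (H - S)"
    then have "(H - S)\<inverse>``{v} = H\<inverse>``{v}" "v \<in> Range H" using ran by blast+
    then show "card ((H - S)\<inverse>``{v}) = 2" using assms(1) unfolding two_regular_def by simp
  qed
qed

lemma perfect_matching_square:
  assumes "a \<noteq> a'" "b \<noteq> b'"
  shows "perfect_matching {(a, b), (a', b')} ({a, a'} \<times> {b, b'})"
proof -
  have "{(a, b), (a', b')}``{u} = (if u = a then {b} else if u = a' then {b'} else {})" for u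
    using assms by auto
  moreover have "{(a, b), (a', b')}\<inverse>``{v} = (if v = b then {a} else if v = b' then {a'} else {})" for v
    using assms by auto
  ultimately show ?thesis by (auto simp: perfect_matching_def)
qed

lemma square_is_component:
  assumes "two_regular H" "H``{a} = {b, b'}" "H\<inverse>``{b} = {a, a'}" "(a', b') \<in> H"
    and "a \<noteq> a'" "b \<noteq> b'"
  shows "\<forall>u \<in> Domain ({a, a'} \<times> {b, b'}). ({a, a'} \<times> {b, b'})``{u} = H``{u}"
    and "\<forall>v \<in> Range ({a, a'} \<times> {b, b'}). ({a, a'} \<times> {b, b'})\<inverse>``{v} = H\<inverse>``{v}"
proof -
  have "(a', b) \<in> H" "(a, b') \<in> H" using assms(2,3) by blast+
  then have "card (H``{a'}) = 2" "card (H\<inverse>``{b'}) = 2"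
    using assms(1) unfolding two_regular_def by blast+
  have "H``{a'} = {b, b'}"
    by (rule card_2_eq) (use \<open>card (H``{a'}) = 2\<close> \<open>(a', b) \<in> H\<close> assms(4,6) in auto)
  moreover have "H\<inverse>``{b'} = {a, a'}"
    by (rule card_2_eq) (use \<open>card (H\<inverse>``{b'}) = 2\<close> \<open>(a, b') \<in> H\<close> assms(4,5) in auto)
  ultimately show "\<forall>u \<in> Domain ({a, a'} \<times> {b, b'}). ({a, a'} \<times> {b, b'})``{u} = H``{u}"
    and "\<forall>v \<in> Range ({a, a'} \<times> {b, b'}). ({a, a'} \<times> {b, b'})\<inverse>``{v} = H\<inverse>``{v}"
    using assms(2,3) by auto
qed

lemma two_regular_Diff_square:
  assumes "two_regular H" "H``{a} = {b, b'}" "H\<inverse>``{b} = {a, a'}" "(a', b') \<in> H"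
    and "a \<noteq> a'" "b \<noteq> b'"
  shows "two_regular (H - {a, a'} \<times> {b, b'})"
  using two_regular_Diff_component(1)[OF assms(1) square_is_component[OF assms]] .

lemma perfect_matching_Un_square:
  assumes "two_regular H" "H``{a} = {b, b'}" "H\<inverse>``{b} = {a, a'}" "(a', b') \<in> H"
    and "a \<noteq> a'" "b \<noteq> b'"
    and "perfect_matching M (H - {a, a'} \<times> {b, b'})"
  shows "perfect_matching (M \<union> {(a, b), (a', b')}) H"
proof -
  have H: "(H - {a, a'} \<times> {b, b'}) \<union> {a, a'} \<times> {b, b'} = H" using assms(2-4) by blast
  have "perfect_matching (M \<union> {(a, b), (a', b')}) ((H - {a, a'} \<times> {b, b'}) \<union> {a, a'} \<times> {b, b'})"
    using perfect_matching_Un[OF assms(7) perfect_matching_square[OF assms(5,6)]]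
      two_regular_Diff_component(2,3)[OF assms(1) square_is_component[OF assms(1-6)]] by blast
  then show ?thesis by (simp only: H)
qed

lemma two_regular_has_perfect_matching:
  assumes "finite H" "two_regular H"
  shows "\<exists>M. perfect_matching M H"
  using assms
proof (induction "card H" arbitrary: H rule: less_induct)
  case less
  show ?case
  proof (cases "H = {}")
    case True
    then show ?thesis by (auto simp: perfect_matching_def)
  next
    case False
    then obtain a b where ab: "(a, b) \<in> H" by auto
    then have "card (H``{a}) = 2" "card (H\<inverse>``{b}) = 2"
      using less.prems(2) unfolding two_regular_def by blast+
    then obtain a' b' where b': "b' \<noteq> b" "H``{a} = {b, b'}" and a': "a' \<noteq> a" "H\<inverse>``{b} = {a, a'}"
      using ab card_2_other by (metis Image_singleton_iff converse_iff)
    show ?thesis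
    proof (cases "(a', b') \<in> H")
      case True
      have "card (H - {a, a'} \<times> {b, b'}) < card H"
        using ab less.prems(1) by (intro psubset_card_mono) auto
      then obtain M where "perfect_matching M (H - {a, a'} \<times> {b, b'})"
        using less two_regular_Diff_square[OF less.prems(2) b'(2) a'(2) True] a'(1) b'(1) by blast
      then show ?thesis
        using perfect_matching_Un_square[OF less.prems(2) b'(2) a'(2) True] a'(1) b'(1) by blast
    next
      case False
      have "card (shortcut a b a' b' H) < card H"
        using less.prems(1) ab a' b' by (intro card_shortcut_less) auto
      moreover have "finite (shortcut a b a' b' H)" using less.prems(1) by (simp add: shortcut_def)
      moreover have "two_regular (shortcut a b a' b' H)"
        using two_regular_shortcut[OF less.prems(2) b'(2) a'(2)] a'(1) b'(1) False by metis
      ultimately obtain M where "perfect_matching M (shortcut a b a' b' H)"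
        using less.hyps by blast
      then show ?thesis
        using perfect_matching_unshortcut b' a' by metis
    qed
  qed
qed

definition half_unit_row :: "('a \<times> 'b) set \<Rightarrow> ('a \<times> 'b) set \<Rightarrow> 'a \<Rightarrow> bool" where
  "half_unit_row F H u \<longleftrightarrow>
     (card (F``{u}) = 1 \<and> H``{u} = {}) \<or> (F``{u} = {} \<and> card (H``{u}) = 2)"

lemma half_unit_rowI:
  assumes "finite (F``{u})" "finite (H``{u})" "real (card (F``{u})) + real (card (H``{u})) / 2 = 1"
  shows "half_unit_row F H u"
proof -
  have "real (2 * card (F``{u}) + card (H``{u})) = 2" using assms(3) by simp
  then have "2 * card (F``{u}) + card (H``{u}) = 2" by linarith
  then have "(card (F``{u}) = 1 \<and> card (H``{u}) = 0) \<or> (card (F``{u}) = 0 \<and> card (H``{u}) = 2)"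
    by presburger
  then show ?thesis using assms(1,2) by (auto simp: half_unit_row_def)
qed

lemma card_Image_Un_perfect_matching:
  assumes "perfect_matching M H" "F \<inter> H = {}" "half_unit_row F H u"
  shows "card ((F \<union> M)``{u}) = 1"
  using assms(3) unfolding half_unit_row_def
proof (elim disjE conjE)
  assume "card (F``{u}) = 1" "H``{u} = {}"
  moreover have "M``{u} = {}" using assms(1) \<open>H``{u} = {}\<close> by (auto simp: perfect_matching_def)
  ultimately show ?thesis by (simp add: Un_Image)
next
  assume "F``{u} = {}" "card (H``{u}) = 2"
  then have "H``{u} \<noteq> {}" by auto
  then have "u \<in> Domain H" by blast
  then have "card (M``{u}) = 1" using assms(1) by (simp add: perfect_matching_def)
  with \<open>F``{u} = {}\<close> show ?thesis by (simp add: Un_Image)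
qed

lemma finite_arcs: "finite (arcs n)"
  by (rule finite_subset[of _ "{0..<n} \<times> {0..<n}"]) (auto simp: arcs_def)

lemma sum_indicator_delta_out:
  assumes "G \<subseteq> arcs n"
  shows "sum (indicator G) (delta_out n w) = real (card (G``{w}))"
proof -
  have "delta_out n w \<inter> G = Pair w ` (G``{w})"
    using assms by (auto simp: delta_out_def)
  moreover have "finite (delta_out n w)"
    using finite_arcs by (rule finite_subset[rotated]) (auto simp: delta_out_def)
  ultimately have "sum (indicator G) (delta_out n w) = real (card (Pair w ` (G``{w})))"
    by (simp add: indicator_def flip: sum.inter_restrict)
  then show ?thesis by (simp add: card_image inj_on_def)
qed

lemma sum_indicator_delta_in:
  assumes "G \<subseteq> arcs n"
  shows "sum (indicator G) (delta_in n w) = real (card (G\<inverse>``{w}))"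
proof -
  have "delta_in n w \<inter> G = (\<lambda>u. (u, w)) ` (G\<inverse>``{w})"
    using assms by (auto simp: delta_in_def)
  moreover have "finite (delta_in n w)"
    using finite_arcs by (rule finite_subset[rotated]) (auto simp: delta_in_def)
  ultimately have "sum (indicator G) (delta_in n w) = real (card ((\<lambda>u. (u, w)) ` (G\<inverse>``{w})))"
    by (simp add: indicator_def flip: sum.inter_restrict)
  then show ?thesis by (simp add: card_image inj_on_def)
qed

lemma indicator_in_cycle_covers:
  assumes "G \<subseteq> arcs n" "\<forall>w < n. card (G``{w}) = 1 \<and> card (G\<inverse>``{w}) = 1"
  shows "indicator G \<in> cycle_covers n"
  using assms sum_indicator_delta_out[OF assms(1)] sum_indicator_delta_in[OF assms(1)]
  by (auto simp: cycle_covers_def RE_def indicator_def)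

lemma ASEP_support: "x \<in> ASEP n \<Longrightarrow> x e \<noteq> 0 \<Longrightarrow> e \<in> arcs n"
  unfolding ASEP_def RE_def by blast

lemma ASEP_half_unit_rows:
  assumes "x \<in> ASEP n" "F \<subseteq> arcs n" "H \<subseteq> arcs n"
    and "x = (\<lambda>e. indicator F e + indicator H e / 2)"
  shows "\<forall>w < n. half_unit_row F H w \<and> half_unit_row (F\<inverse>) (H\<inverse>) w"
proof -
  have "finite F" "finite H" using assms(2,3) finite_arcs by (auto intro: finite_subset)
  moreover have "sum x (delta_out n w) = 1" "sum x (delta_in n w) = 1" if "w < n" for w
    using assms(1) that by (simp_all add: ASEP_def)
  ultimately show ?thesis
    by (auto intro!: half_unit_rowI simp: assms(4) sum.distrib simp flip: sum_divide_distrib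
        sum_indicator_delta_out[OF assms(2)] sum_indicator_delta_out[OF assms(3)]
        sum_indicator_delta_in[OF assms(2)] sum_indicator_delta_in[OF assms(3)])
qed

lemma indicator_Un_perfect_matching_in_cycle_covers:
  assumes "F \<subseteq> arcs n" "H \<subseteq> arcs n" "F \<inter> H = {}" "perfect_matching M H"
    and rows: "\<forall>w < n. half_unit_row F H w \<and> half_unit_row (F\<inverse>) (H\<inverse>) w"
  shows "indicator (F \<union> M) \<in> cycle_covers n"
proof (rule indicator_in_cycle_covers)
  show "F \<union> M \<subseteq> arcs n" using assms(1,2,4) by (auto simp: perfect_matching_def)
  have "perfect_matching (M\<inverse>) (H\<inverse>)" "F\<inverse> \<inter> H\<inverse> = {}"
    using assms(3,4) by (auto simp: perfect_matching_converse)
  then show "\<forall>w < n. card ((F \<union> M)``{w}) = 1 \<and> card ((F \<union> M)\<inverse>``{w}) = 1"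
    using rows card_Image_Un_perfect_matching[OF assms(4,3)]
      card_Image_Un_perfect_matching[of "M\<inverse>" "H\<inverse>" "F\<inverse>"]
    by (simp add: converse_Un)
qed

lemma half_integral_eq_indicators:
  fixes x :: "'a \<Rightarrow> real"
  assumes "\<forall>e. x e \<in> {0, 1/2, 1}"
  shows "x = (\<lambda>e. indicator {e. x e = 1} e + indicator {e. x e = 1/2} e / 2)"
proof
  fix e
  from assms have "x e \<in> {0, 1/2, 1}" ..
  then show "x e = indicator {e. x e = 1} e + indicator {e. x e = 1/2} e / 2"
    by (auto simp: indicator_def)
qed

lemma indicator_half_split:
  fixes F H M :: "'a set"
  assumes "F \<inter> H = {}" "M \<subseteq> H"
  shows "indicator F e + indicator H e / 2 =
    (1/2) * indicator (F \<union> M) e + (1/2) * (indicator (F \<union> (H - M)) e :: real)"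
  using assms by (cases "e \<in> M") (auto simp: indicator_def)

theorem mainTheorem2:
  fixes n :: nat and x :: "nat \<times> nat \<Rightarrow> real"
  assumes "n \<ge> 4"
    and "extreme_pt x (ASEP n)"
    and "\<forall>e \<in> arcs n. x e \<in> {0, 1/2, 1}"
  shows "\<exists>y1 \<in> cycle_covers n. \<exists>y2 \<in> cycle_covers n. x = (\<lambda>e. (1/2) * y1 e + (1/2) * y2 e)"
proof -
  have x: "x \<in> ASEP n" using assms(2) by (simp add: extreme_pt_def)
  define F H where "F = {e. x e = 1}" and "H = {e. x e = 1/2}"
  have arcs: "F \<subseteq> arcs n" "H \<subseteq> arcs n"
    using ASEP_support[OF x] unfolding F_def H_def by fastforce+
  have "\<forall>e. x e \<in> {0, 1/2, 1}" using assms(3) ASEP_support[OF x] by blast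
  then have x_eq: "x = (\<lambda>e. indicator F e + indicator H e / 2)"
    unfolding F_def H_def by (rule half_integral_eq_indicators)
  note rows = ASEP_half_unit_rows[OF x arcs x_eq]
  have "two_regular H"
    using rows arcs(2) unfolding two_regular_def half_unit_row_def arcs_def by fastforce
  moreover have "finite H" using arcs(2) finite_arcs by (rule finite_subset)
  ultimately obtain M where M: "perfect_matching M H" "perfect_matching (H - M) H"
    using two_regular_has_perfect_matching perfect_matching_Diff by blast
  have "F \<inter> H = {}" by (auto simp: F_def H_def)
  then have "indicator (F \<union> N) \<in> cycle_covers n" if "perfect_matching N H" for N
    using indicator_Un_perfect_matching_in_cycle_covers[OF arcs _ that rows] by blast
  moreover have "x = (\<lambda>e. (1/2) * indicator (F \<union> M) e + (1/2) * indicator (F \<union> (H - M)) e)"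
    using indicator_half_split[OF \<open>F \<inter> H = {}\<close>] M(1) by (auto simp: x_eq perfect_matching_def)
  ultimately show ?thesis using M by blast
qed

end
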